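(* Let $r\geq 0$ and $k$ be integers, and let $n,m$ be integers with $n-1\geq m\geq 1$. Then \begin{align*} \sum_{l=0}^{n-m}\binom{n}{l}S_{1}(n-l,m)\tilde{A}_{l}^{(r,k)} &=r\sum_{l=0}^{n-m-1}\sum_{a=0}^{n-l-m-1}\frac{(-1)^{a+1}a!}{a+2}\binom{n-1}{l+m}\binom{n-l-m-1}{a}S_{1}(l+m,m)\tilde{A}_{n-l-m-a-1}^{(r+1,k)}\\ &\quad +\sum_{l=0}^{n-m-1}\frac{1}{n-l-m}\binom{n-1}{l+m}S_{1}(l+m,m)\left(\tilde{A}_{n-l-m}^{(r+1,k-1)}-\tilde{A}_{n-l-m}^{(r+1,k)}\right)\\ &\quad +\sum_{l=0}^{n-m}\binom{n-1}{l+m-1}S_{1}(l+m-1,m-1)\tilde{A}_{n-l-m}^{(r,k)}(-1). \end{align*}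
   Context: For $k\in\mathbf{Z}$, $Lif_{k}(x)=\sum_{m=0}^{\infty}\frac{x^{m}}{m!(m+1)^{k}}$. For integers $r\geq 0$, $k\in\mathbf{Z}$, the polynomials $\tilde{A}_{n}^{(r,k)}(x)$ are defined by \[\left(\frac{t}{(1+t)\log(1+t)}\right)^{r}Lif_{k}\left(-\log(1+t)\right)(1+t)^{x}=\sum_{n=0}^{\infty}\tilde{A}_{n}^{(r,k)}(x)\frac{t^{n}}{n!},\] and $\tilde{A}_{n}^{(r,k)}=\tilde{A}_{n}^{(r,k)}(0)$. $S_{1}(n,m)$ denotes the signed Stirling numbers of the first kind, defined by $x(x-1)\cdots(x-n+1)=\sum_{m=0}^{n}S_{1}(n,m)x^{m}$. *)

theory Defs
  imports "HOL-Computational_Algebra.Formal_Power_Series" "HOL-Combinatorics.Stirling"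
begin

(* Signed Stirling numbers of the first kind: x(x-1)...(x-n+1) = sum_m S1 n m x^m *)
definition S1 :: "nat \<Rightarrow> nat \<Rightarrow> real" where
  "S1 n m = (-1) ^ (n - m) * real (stirling n m)"

definition Lif :: "int \<Rightarrow> real fps" where
  "Lif k = Abs_fps (\<lambda>m. 1 / (fact m * (real (m + 1)) powi k))"

(* generating function (t/((1+t)log(1+t)))^r Lif_k(-log(1+t)) (1+t)^x *)
definition Agen :: "nat \<Rightarrow> int \<Rightarrow> real \<Rightarrow> real fps" where
  "Agen r k x = (fps_X / ((1 + fps_X) * fps_ln 1)) ^ r
      * (Lif k oo (- fps_ln 1)) * fps_binomial x"

definition Atil :: "nat \<Rightarrow> int \<Rightarrow> nat \<Rightarrow> real \<Rightarrow> real" where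
  "Atil r k n x = fact n * fps_nth (Agen r k x) n"

end

theory Submission
  imports Defs
begin

text \<open>
  The left-hand side is the \<open>n\<close>-th exponential coefficient of
  \<open>G = Agen r k 0 * stirling1_egf m\<close>, the second factor being \<open>log(1+t)^m / m!\<close>;
  so it is the \<open>(n-1)\<close>-st coefficient of \<open>G'\<close>. The kernel \<open>K = t / ((1+t) log(1+t))\<close>
  satisfies \<open>K' = D K^2\<close> with \<open>D = \<Sum>\<^sub>a (-1)^(a+1) t^a / (a+2)\<close>, and
  \<open>t (Lif k (-log(1+t)))' = K (Lif (k-1) - Lif k)(-log(1+t))\<close>. Hence the product rule splits
  \<open>G'\<close> into the three sums; in the last one the factor \<open>1/(1+t)\<close> produced by differentiating
  \<open>log(1+t)^m\<close> turns the evaluation point \<open>x = 0\<close> into \<open>x = -1\<close>.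
\<close>

definition egf_nth :: "'a::{comm_semiring_1,semiring_char_0} fps \<Rightarrow> nat \<Rightarrow> 'a" where
  "egf_nth f n = fact n * fps_nth f n"

lemma egf_nth_add: "egf_nth (f + g) n = egf_nth f n + egf_nth g n"
  by (simp add: egf_nth_def distrib_left)

lemma egf_nth_diff:
  "egf_nth (f - g) n = egf_nth f n - egf_nth (g :: 'a::{comm_ring_1,semiring_char_0} fps) n"
  by (simp add: egf_nth_def right_diff_distrib)

lemma egf_nth_fps_const_mult: "egf_nth (fps_const c * f) n = c * egf_nth f n"
  by (simp add: egf_nth_def mult.left_commute)

lemma egf_nth_deriv: "egf_nth (fps_deriv f) n = egf_nth f (Suc n)"
  by (simp add: egf_nth_def fps_deriv_nth algebra_simps)

lemma egf_nth_shift: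
  "egf_nth (fps_shift 1 f) n = egf_nth (f :: 'a::field_char_0 fps) (Suc n) / of_nat (Suc n)"
  by (simp add: egf_nth_def flip: of_nat_Suc)

lemma egf_nth_one_plus_X_mult:
  "egf_nth ((1 + fps_X) * f) n = egf_nth f n + of_nat n * egf_nth f (n - 1)"
  by (cases n) (simp_all add: egf_nth_def fps_mult_fps_X_plus_1_nth algebra_simps)

lemma egf_nth_mult:
  "egf_nth (f * g) n = (\<Sum>i=0..n. of_nat (n choose i) * egf_nth f i * egf_nth g (n - i))"
  unfolding egf_nth_def fps_mult_nth sum_distrib_left
proof (rule sum.cong[OF refl])
  fix i assume "i \<in> {0..n}"
  then have "fact i * fact (n - i) * (n choose i) = fact n"
    by (intro binomial_fact_lemma) simp
  then have "(fact n :: 'a) = of_nat (fact i * fact (n - i) * (n choose i))"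
    by (simp only: of_nat_fact)
  then show "fact n * (fps_nth f i * fps_nth g (n - i)) =
      of_nat (n choose i) * (fact i * fps_nth f i) * (fact (n - i) * fps_nth g (n - i))"
    by (simp only: of_nat_mult of_nat_fact ac_simps)
qed

lemma fps_eq_iff_egf_nth:
  "f = g \<longleftrightarrow> (\<forall>n. egf_nth f n = egf_nth (g :: 'a::field_char_0 fps) n)"
  by (simp add: egf_nth_def fps_eq_iff)

definition ln_quot :: "real fps" where
  "ln_quot = Abs_fps (\<lambda>n. (-1) ^ n / real (n + 1))"

lemma fps_ln_1_eq: "fps_ln (1::real) = fps_X * ln_quot"
  by (rule fps_ext) (simp add: fps_ln_nth ln_quot_def)

lemma fps_nth_ln_quot_0 [simp]: "fps_nth ln_quot 0 = 1"
  by (simp add: ln_quot_def)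

definition ln_kernel :: "real fps" where
  "ln_kernel = fps_X / ((1 + fps_X) * fps_ln 1)"

lemma ln_kernel_eq_inverse: "ln_kernel = inverse ((1 + fps_X) * ln_quot)"
proof -
  define H where "H = (1 + fps_X) * ln_quot"
  have "fps_nth H 0 = 1" by (simp add: H_def)
  then have "inverse H * (fps_X * H) = fps_X" and "fps_X * H \<noteq> 0"
    by (auto simp: mult.left_commute [of _ fps_X] inverse_mult_eq_1)
  then have "fps_X / (fps_X * H) = inverse H"
    by (metis fps_divide_times_eq)
  then show ?thesis
    by (simp add: ln_kernel_def fps_ln_1_eq H_def mult.left_commute)
qed

lemma ln_kernel_mult_fps_ln_1: "ln_kernel * fps_ln 1 = fps_X * inverse (1 + fps_X)"
proof -
  have "inverse ln_quot * ln_quot = 1" by (simp add: inverse_mult_eq_1)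
  then show ?thesis
    by (simp add: ln_kernel_eq_inverse fps_ln_1_eq fps_inverse_mult mult_ac)
qed

definition kernel_deriv_factor :: "real fps" where
  "kernel_deriv_factor = Abs_fps (\<lambda>a. (-1) ^ (a + 1) / (real a + 2))"

lemma egf_nth_kernel_deriv_factor:
  "egf_nth kernel_deriv_factor a = (-1) ^ (a + 1) * fact a / (real a + 2)"
  by (simp add: egf_nth_def kernel_deriv_factor_def)

lemma fps_deriv_one_plus_X_mult_ln_quot:
  "fps_deriv ((1 + fps_X) * ln_quot) = - kernel_deriv_factor"
proof (rule fps_ext)
  fix a
  have "(real a + 1) * (- s / (real a + 2) + s / (real a + 1)) = s / (real a + 2)" for s :: real
    by (simp add: field_simps add_nonneg_eq_0_iff)
  then show "fps_nth (fps_deriv ((1 + fps_X) * ln_quot)) a = fps_nth (- kernel_deriv_factor) a"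
    unfolding fps_deriv_nth fps_mult_fps_X_plus_1_nth
    by (simp add: ln_quot_def kernel_deriv_factor_def add.commute)
qed

lemma fps_deriv_ln_kernel: "fps_deriv ln_kernel = kernel_deriv_factor * ln_kernel ^ 2"
  unfolding ln_kernel_eq_inverse
  by (subst fps_inverse_deriv)
    (simp add: fps_mult_fps_X_plus_1_nth, simp only: fps_deriv_one_plus_X_mult_ln_quot minus_minus)

lemma fps_deriv_ln_kernel_power:
  "fps_deriv (ln_kernel ^ r) = fps_const (real r) * kernel_deriv_factor * ln_kernel ^ (r + 1)"
proof (cases r)
  case (Suc q)
  then show ?thesis
    by (simp only: fps_deriv_power' fps_deriv_ln_kernel fps_of_nat)
      (simp add: power_add [symmetric] power2_eq_square mult_ac)
qed simp

lemma fps_X_mult_fps_deriv_Lif: "fps_X * fps_deriv (Lif k) = Lif (k - 1) - Lif k"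
proof (rule fps_ext)
  fix n
  define q where "q = (1 + real n) powi (k - 1)"
  have "q \<noteq> 0" by (simp add: q_def)
  moreover have "(1 + real n) powi k = (1 + real n) * q"
    unfolding q_def by (subst power_int_minus_mult [symmetric]) (simp_all add: mult.commute)
  ultimately show "fps_nth (fps_X * fps_deriv (Lif k)) n = fps_nth (Lif (k - 1) - Lif k) n"
    by (simp add: fps_mult_fps_X_deriv_shift Lif_def divide_simps flip: q_def)
qed

definition Lif_log :: "int \<Rightarrow> real fps" where
  "Lif_log k = Lif k oo - fps_ln 1"

lemma fps_X_mult_fps_deriv_Lif_log:
  "fps_X * fps_deriv (Lif_log k) = ln_kernel * (Lif_log (k - 1) - Lif_log k)"
proof -
  define Q where "Q = fps_deriv (Lif k) oo - fps_ln 1"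
  have ln0: "fps_nth (- fps_ln (1::real)) 0 = 0"
    by (simp add: fps_ln_nth)
  have "fps_deriv (Lif_log k) = - (inverse (1 + fps_X) * Q)"
    by (simp add: Lif_log_def Q_def fps_compose_deriv [OF ln0] fps_ln_deriv)
  moreover have "Lif_log (k - 1) - Lif_log k = - (fps_ln 1 * Q)"
  proof -
    have "(fps_X * fps_deriv (Lif k)) oo - fps_ln 1 = (fps_X oo - fps_ln 1) * Q"
      by (simp add: Q_def fps_compose_mult_distrib [OF ln0])
    also have "fps_X oo - fps_ln 1 = - fps_ln (1::real)"
      using ln0 by simp
    finally show ?thesis
      by (simp add: Lif_log_def fps_X_mult_fps_deriv_Lif fps_compose_sub_distrib)
  qed
  moreover have "ln_kernel * (fps_ln 1 * Q) = fps_X * (inverse (1 + fps_X) * Q)"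
    by (simp only: mult.assoc [symmetric] ln_kernel_mult_fps_ln_1)
  ultimately show ?thesis
    by (simp only: mult_minus_right)
qed

lemma Agen_eq: "Agen r k x = ln_kernel ^ r * Lif_log k * fps_binomial x"
  by (simp add: Agen_def ln_kernel_def Lif_log_def)

lemma Agen_minus_one: "Agen r k (-1) = inverse (1 + fps_X) * Agen r k 0"
  by (simp add: Agen_eq fps_binomial_minus_one mult_ac)

lemma fps_deriv_Agen_0:
  "fps_deriv (Agen r k 0) = fps_const (real r) * kernel_deriv_factor * Agen (r + 1) k 0
     + fps_shift 1 (Agen (r + 1) (k - 1) 0 - Agen (r + 1) k 0)"
proof -
  have "Agen (r + 1) (k - 1) 0 - Agen (r + 1) k 0
      = ln_kernel ^ r * (ln_kernel * (Lif_log (k - 1) - Lif_log k))"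
    by (simp add: Agen_eq algebra_simps)
  also have "\<dots> = ln_kernel ^ r * fps_deriv (Lif_log k) * fps_X"
    by (simp only: fps_X_mult_fps_deriv_Lif_log [symmetric] mult_ac)
  finally have "ln_kernel ^ r * fps_deriv (Lif_log k)
      = fps_shift 1 (Agen (r + 1) (k - 1) 0 - Agen (r + 1) k 0)"
    by (simp only: fps_shift_times_fps_X')
  moreover have "fps_deriv (Agen r k 0)
      = fps_deriv (ln_kernel ^ r) * Lif_log k + ln_kernel ^ r * fps_deriv (Lif_log k)"
    by (simp add: Agen_eq)
  ultimately show ?thesis
    by (simp add: fps_deriv_ln_kernel_power Agen_eq mult.assoc)
qed

lemma Atil_eq_egf_nth: "Atil r k n x = egf_nth (Agen r k x) n"
  by (simp add: Atil_def egf_nth_def)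

lemma S1_eq_0_if_less: "j < m \<Longrightarrow> S1 j m = 0"
  by (simp add: S1_def)

lemma S1_Suc_Suc: "S1 (Suc j) (Suc m) = S1 j m - real j * S1 j (Suc m)"
proof (cases "m < j")
  case True
  then obtain d where "j = Suc (m + d)"
    using less_iff_Suc_add by blast
  then show ?thesis
    by (simp add: S1_def algebra_simps)
qed (auto simp: S1_def le_less)

definition stirling1_egf :: "nat \<Rightarrow> real fps" where
  "stirling1_egf m = Abs_fps (\<lambda>j. S1 j m / fact j)"

lemma egf_nth_stirling1_egf: "egf_nth (stirling1_egf m) j = S1 j m"
  by (simp add: egf_nth_def stirling1_egf_def)

lemma fps_deriv_stirling1_egf:
  "fps_deriv (stirling1_egf (Suc m)) = inverse (1 + fps_X) * stirling1_egf m"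
proof -
  have "(1 + fps_X) * fps_deriv (stirling1_egf (Suc m)) = stirling1_egf m"
    unfolding fps_eq_iff_egf_nth
  proof
    fix n
    show "egf_nth ((1 + fps_X) * fps_deriv (stirling1_egf (Suc m))) n = egf_nth (stirling1_egf m) n"
      by (cases n) (simp_all add: egf_nth_one_plus_X_mult egf_nth_deriv egf_nth_stirling1_egf
          S1_Suc_Suc)
  qed
  moreover have "inverse (1 + fps_X) * (1 + fps_X) = (1 :: real fps)"
    by (simp add: inverse_mult_eq_1)
  ultimately show ?thesis
    by (metis mult.assoc mult_1)
qed

lemma egf_nth_stirling1_egf_mult:
  assumes "c \<le> N"
  shows "egf_nth (stirling1_egf c * f) N
    = (\<Sum>l=0..N-c. real (N choose (l + c)) * S1 (l + c) c * egf_nth f (N - (l + c)))"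
proof -
  define g where "g i = real (N choose i) * S1 i c * egf_nth f (N - i)" for i
  have "egf_nth (stirling1_egf c * f) N = (\<Sum>i=0..N. g i)"
    by (simp add: egf_nth_mult egf_nth_stirling1_egf g_def)
  also have "\<dots> = (\<Sum>i=c..N. g i)"
    by (rule sum.mono_neutral_right) (auto simp: g_def S1_eq_0_if_less)
  also have "\<dots> = (\<Sum>l=0..N-c. g (l + c))"
    using sum.shift_bounds_cl_nat_ivl [of g 0 c "N - c"] assms by simp
  finally show ?thesis
    by (simp add: g_def)
qed

lemma egf_nth_Agen_mult_stirling1_egf:
  "egf_nth (Agen r k 0 * stirling1_egf m) n
    = (\<Sum>l=0..n-m. real (n choose l) * S1 (n - l) m * Atil r k l 0)"
proof -
  have "egf_nth (Agen r k 0 * stirling1_egf m) n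
      = (\<Sum>l=0..n. real (n choose l) * S1 (n - l) m * Atil r k l 0)"
    unfolding egf_nth_mult egf_nth_stirling1_egf Atil_eq_egf_nth by (simp add: mult_ac)
  also have "\<dots> = (\<Sum>l=0..n-m. real (n choose l) * S1 (n - l) m * Atil r k l 0)"
    by (rule sum.mono_neutral_right) (auto simp: S1_eq_0_if_less)
  finally show ?thesis .
qed

lemma fps_deriv_Agen_mult_stirling1_egf:
  "fps_deriv (Agen r k 0 * stirling1_egf (Suc m)) =
     fps_const (real r) * (stirling1_egf (Suc m) * (kernel_deriv_factor * Agen (r + 1) k 0))
     + stirling1_egf (Suc m) * fps_shift 1 (Agen (r + 1) (k - 1) 0 - Agen (r + 1) k 0)
     + stirling1_egf m * Agen r k (-1)"
  by (simp add: fps_deriv_Agen_0 fps_deriv_stirling1_egf Agen_minus_one algebra_simps)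

lemma egf_nth_stirling1_egf_mult_kernel_deriv_factor_mult:
  assumes "m < n"
  shows "egf_nth (stirling1_egf m * (kernel_deriv_factor * f)) (n - 1)
    = (\<Sum>l=0..n-m-1. \<Sum>a=0..n-l-m-1. (-1) ^ (a + 1) * fact a / (real a + 2)
        * real ((n - 1) choose (l + m)) * real ((n - l - m - 1) choose a) * S1 (l + m) m
        * egf_nth f (n - l - m - a - 1))"
proof -
  have "egf_nth (stirling1_egf m * (kernel_deriv_factor * f)) (n - 1)
      = (\<Sum>l=0..n-1-m. real ((n - 1) choose (l + m)) * S1 (l + m) m
          * egf_nth (kernel_deriv_factor * f) (n - 1 - (l + m)))"
    using assms by (intro egf_nth_stirling1_egf_mult) simp
  also have "\<dots> = (\<Sum>l=0..n-m-1. \<Sum>a=0..n-l-m-1. (-1) ^ (a + 1) * fact a / (real a + 2)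
        * real ((n - 1) choose (l + m)) * real ((n - l - m - 1) choose a) * S1 (l + m) m
        * egf_nth f (n - l - m - a - 1))"
    unfolding egf_nth_mult egf_nth_kernel_deriv_factor
    by (simp add: sum_distrib_left mult_ac)
  finally show ?thesis .
qed

lemma egf_nth_stirling1_egf_mult_shift:
  assumes "m < n"
  shows "egf_nth (stirling1_egf m * fps_shift 1 f) (n - 1)
    = (\<Sum>l=0..n-m-1. 1 / real (n - l - m) * real ((n - 1) choose (l + m)) * S1 (l + m) m
        * egf_nth f (n - l - m))"
proof -
  have "egf_nth (stirling1_egf m * fps_shift 1 f) (n - 1)
      = (\<Sum>l=0..n-1-m. real ((n - 1) choose (l + m)) * S1 (l + m) m
          * egf_nth (fps_shift 1 f) (n - 1 - (l + m)))"
    using assms by (intro egf_nth_stirling1_egf_mult) simp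
  also have "\<dots> = (\<Sum>l=0..n-m-1. 1 / real (n - l - m) * real ((n - 1) choose (l + m))
        * S1 (l + m) m * egf_nth f (n - l - m))"
  proof (rule sum.cong)
    fix l assume "l \<in> {0..n-m-1}"
    then have "Suc (n - 1 - (l + m)) = n - l - m"
      using assms by auto
    then show "real ((n - 1) choose (l + m)) * S1 (l + m) m
          * egf_nth (fps_shift 1 f) (n - 1 - (l + m))
        = 1 / real (n - l - m) * real ((n - 1) choose (l + m))
          * S1 (l + m) m * egf_nth f (n - l - m)"
      by (simp only: egf_nth_shift) simp
  qed simp
  finally show ?thesis .
qed

lemma egf_nth_stirling1_egf_pred_mult:
  assumes "1 \<le> m" "m \<le> n"
  shows "egf_nth (stirling1_egf (m - 1) * f) (n - 1)
    = (\<Sum>l=0..n-m. real ((n - 1) choose (l + m - 1)) * S1 (l + m - 1) (m - 1)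
        * egf_nth f (n - l - m))"
  using assms egf_nth_stirling1_egf_mult [of "m - 1" "n - 1" f] by simp

theorem theorem6:
  fixes r :: nat and k :: int and n m :: nat
  assumes "1 \<le> m" and "m \<le> n - 1" and "n \<ge> 2"
  shows "(\<Sum>l=0..n-m. real (n choose l) * S1 (n - l) m * Atil r k l 0) =
      real r * (\<Sum>l=0..n-m-1. \<Sum>a=0..n-l-m-1.
          (-1) ^ (a + 1) * fact a / (real a + 2) * real ((n - 1) choose (l + m))
          * real ((n - l - m - 1) choose a) * S1 (l + m) m * Atil (r + 1) k (n - l - m - a - 1) 0)
    + (\<Sum>l=0..n-m-1. 1 / real (n - l - m) * real ((n - 1) choose (l + m)) * S1 (l + m) m
          * (Atil (r + 1) (k - 1) (n - l - m) 0 - Atil (r + 1) k (n - l - m) 0))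
    + (\<Sum>l=0..n-m. real ((n - 1) choose (l + m - 1)) * S1 (l + m - 1) (m - 1)
          * Atil r k (n - l - m) (-1))"
proof -
  obtain m' where m: "m = Suc m'"
    using assms by (cases m) auto
  have "m < n"
    using assms by linarith
  have "(\<Sum>l=0..n-m. real (n choose l) * S1 (n - l) m * Atil r k l 0)
      = egf_nth (Agen r k 0 * stirling1_egf m) n"
    by (simp add: egf_nth_Agen_mult_stirling1_egf)
  also have "\<dots> = egf_nth (fps_deriv (Agen r k 0 * stirling1_egf m)) (n - 1)"
    using \<open>m < n\<close> egf_nth_deriv [of "Agen r k 0 * stirling1_egf m" "n - 1"] by simp
  also have "\<dots>
      = real r * egf_nth (stirling1_egf m * (kernel_deriv_factor * Agen (r + 1) k 0)) (n - 1)
      + egf_nth (stirling1_egf m * fps_shift 1 (Agen (r + 1) (k - 1) 0 - Agen (r + 1) k 0)) (n - 1)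
      + egf_nth (stirling1_egf (m - 1) * Agen r k (-1)) (n - 1)"
    unfolding m fps_deriv_Agen_mult_stirling1_egf egf_nth_add egf_nth_fps_const_mult by simp
  finally show ?thesis
    unfolding egf_nth_stirling1_egf_mult_kernel_deriv_factor_mult [OF \<open>m < n\<close>]
      egf_nth_stirling1_egf_mult_shift [OF \<open>m < n\<close>]
      egf_nth_stirling1_egf_pred_mult [OF \<open>1 \<le> m\<close> less_imp_le [OF \<open>m < n\<close>]]
      egf_nth_diff Atil_eq_egf_nth .
qed

end
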